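(* Let $D$ be an infinite commutative unital integral domain. The images of the monomials in $B$ form a basis of the $D$-module $D\langle X\rangle/I$ (in particular $D\langle X\rangle/I$ is a free $D$-module).
   Context: Let $Y=\{y_1,y_2,\dots\}$ and $Z=\{z_1,z_2,\dots\}$ be disjoint countable sets of variables, $X=Y\cup Z$, and $D\langle X\rangle$ the free unital associative $D$-algebra on $X$, $\mathbb{Z}_2$-graded with the $y_i$ even and the $z_i$ odd. Let $L\langle X\rangle$ be the Lie subalgebra of $D\langle X\rangle$ (bracket $[a,b]=ab-ba$) generated by $X$, with induced grading $L\langle X\rangle^{(0)}\oplus L\langle X\rangle^{(1)}$. An ideal of weak graded identities is a two-sided ideal $J$ of $D\langle X\rangle$ closed under every algebra endomorphism of $D\langle X\rangle$ mapping each $y_i$ into $L\langle X\rangle^{(0)}$ and each $z_i$ into $L\langle X\rangle^{(1)}$; the ideal of weak graded identities generated by a set of polynomials is the smallest such ideal containing it. Let $I$ be the ideal of weak graded identities generated by $y_1y_2-y_2y_1$, $z_1z_2z_3-z_3z_2z_1$ and $y_1z_1+z_1y_1$. Let $B$ be the set of monomials of the forms $y_{a_1}\cdots y_{a_k}$ ($k\ge0$, $a_1\le\dots\le a_k$; $k=0$ gives $1$) and $y_{a_1}\cdots y_{a_k}z_{c_1}z_{d_1}z_{c_2}z_{d_2}\cdots z_{c_m}z_{d_m}$ or $y_{a_1}\cdots y_{a_k}z_{c_1}z_{d_1}\cdots z_{d_{m-1}}z_{c_m}$ (the last odd variable $z_{d_m}$ may be omitted), where $k\ge0$, $m\ge1$,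 $a_1\le\dots\le a_k$, $c_1\le\dots\le c_m$, and the $d_j$ present are nondecreasing. *)

theory Defs
  imports Main
begin

text \<open>Variables: Y i are the even variables y_i, Z i the odd variables z_i.\<close>
datatype var = Y nat | Z nat

text \<open>Elements of the free unital associative algebra D<X> are represented as
  finitely supported coefficient functions on words (noncommutative monomials).\<close>

definition FA :: "(var list \<Rightarrow> 'd::comm_ring_1) set" where
  "FA = {f. finite {w. f w \<noteq> 0}}"

definition pzero :: "var list \<Rightarrow> 'd::comm_ring_1" where
  "pzero = (\<lambda>w. 0)"

definition padd :: "(var list \<Rightarrow> 'd::comm_ring_1) \<Rightarrow> (var list \<Rightarrow> 'd) \<Rightarrow> (var list \<Rightarrow> 'd)" where
  "padd f g = (\<lambda>w. f w + g w)"

definition psub :: "(var list \<Rightarrow> 'd::comm_ring_1) \<Rightarrow> (var list \<Rightarrow> 'd) \<Rightarrow> (var list \<Rightarrow> 'd)" where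
  "psub f g = (\<lambda>w. f w - g w)"

definition psmul :: "'d::comm_ring_1 \<Rightarrow> (var list \<Rightarrow> 'd) \<Rightarrow> (var list \<Rightarrow> 'd)" where
  "psmul c f = (\<lambda>w. c * f w)"

definition pmul :: "(var list \<Rightarrow> 'd::comm_ring_1) \<Rightarrow> (var list \<Rightarrow> 'd) \<Rightarrow> (var list \<Rightarrow> 'd)" where
  "pmul f g = (\<lambda>w. \<Sum>i\<le>length w. f (take i w) * g (drop i w))"

definition pmono :: "var list \<Rightarrow> var list \<Rightarrow> 'd::comm_ring_1" where
  "pmono u = (\<lambda>w. if w = u then 1 else 0)"

definition pvar :: "var \<Rightarrow> var list \<Rightarrow> 'd::comm_ring_1" where
  "pvar x = pmono [x]"

definition pone :: "var list \<Rightarrow> 'd::comm_ring_1" where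
  "pone = pmono []"

definition lie :: "(var list \<Rightarrow> 'd::comm_ring_1) \<Rightarrow> (var list \<Rightarrow> 'd) \<Rightarrow> (var list \<Rightarrow> 'd)" where
  "lie f g = psub (pmul f g) (pmul g f)"

inductive_set LieX :: "(var list \<Rightarrow> 'd::comm_ring_1) set" where
  gen: "pvar x \<in> LieX"
| add: "f \<in> LieX \<Longrightarrow> g \<in> LieX \<Longrightarrow> padd f g \<in> LieX"
| smul: "f \<in> LieX \<Longrightarrow> psmul c f \<in> LieX"
| bracket: "f \<in> LieX \<Longrightarrow> g \<in> LieX \<Longrightarrow> lie f g \<in> LieX"

definition isZ :: "var \<Rightarrow> bool" where
  "isZ x = (case x of Y _ \<Rightarrow> False | Z _ \<Rightarrow> True)"

definition zdeg :: "var list \<Rightarrow> nat" where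
  "zdeg w = length (filter isZ w) mod 2"

definition homog :: "nat \<Rightarrow> (var list \<Rightarrow> 'd::comm_ring_1) \<Rightarrow> bool" where
  "homog p f = (\<forall>w. f w \<noteq> 0 \<longrightarrow> zdeg w = p)"

definition LieX0 :: "(var list \<Rightarrow> 'd::comm_ring_1) set" where
  "LieX0 = {f \<in> LieX. homog 0 f}"

definition LieX1 :: "(var list \<Rightarrow> 'd::comm_ring_1) set" where
  "LieX1 = {f \<in> LieX. homog 1 f}"

definition eval_word :: "(var \<Rightarrow> var list \<Rightarrow> 'd::comm_ring_1) \<Rightarrow> var list \<Rightarrow> (var list \<Rightarrow> 'd)" where
  "eval_word \<sigma> w = foldr (\<lambda>x acc. pmul (\<sigma> x) acc) w pone"

definition psubst :: "(var \<Rightarrow> var list \<Rightarrow> 'd::comm_ring_1) \<Rightarrow> (var list \<Rightarrow> 'd) \<Rightarrow> (var list \<Rightarrow> 'd)" where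
  "psubst \<sigma> f = (\<lambda>u. \<Sum>w\<in>{w. f w \<noteq> 0}. f w * eval_word \<sigma> w u)"

definition admissible :: "(var \<Rightarrow> var list \<Rightarrow> 'd::comm_ring_1) \<Rightarrow> bool" where
  "admissible \<sigma> = (\<forall>i. \<sigma> (Y i) \<in> LieX0 \<and> \<sigma> (Z i) \<in> LieX1)"

definition wg_ideal :: "(var list \<Rightarrow> 'd::comm_ring_1) set \<Rightarrow> bool" where
  "wg_ideal J = (J \<subseteq> FA \<and> pzero \<in> J
     \<and> (\<forall>f\<in>J. \<forall>g\<in>J. padd f g \<in> J)
     \<and> (\<forall>c. \<forall>f\<in>J. psmul c f \<in> J)
     \<and> (\<forall>f\<in>FA. \<forall>g\<in>J. pmul f g \<in> J \<and> pmul g f \<in> J)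
     \<and> (\<forall>\<sigma>. admissible \<sigma> \<longrightarrow> (\<forall>f\<in>J. psubst \<sigma> f \<in> J)))"

definition wg_generated :: "(var list \<Rightarrow> 'd::comm_ring_1) set \<Rightarrow> (var list \<Rightarrow> 'd) set" where
  "wg_generated S = \<Inter>{J. wg_ideal J \<and> S \<subseteq> J}"

definition Iid :: "(var list \<Rightarrow> 'd::comm_ring_1) set" where
  "Iid = wg_generated
     { psub (pmul (pvar (Y 1)) (pvar (Y 2))) (pmul (pvar (Y 2)) (pvar (Y 1))),
       psub (pmul (pmul (pvar (Z 1)) (pvar (Z 2))) (pvar (Z 3)))
            (pmul (pmul (pvar (Z 3)) (pvar (Z 2))) (pvar (Z 1))),
       padd (pmul (pvar (Y 1)) (pvar (Z 1))) (pmul (pvar (Z 1)) (pvar (Y 1))) }"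

text \<open>The set B of monomials: y_{a_1}...y_{a_k} z_{c_1} z_{d_1} z_{c_2} z_{d_2} ...,
  a's sorted, c's (even positions of the z-part) sorted, d's (odd positions) sorted.\<close>
definition Bmon :: "var list set" where
  "Bmon = {map Y as @ map Z zs | as zs. sorted as
             \<and> sorted (nths zs {i. even i}) \<and> sorted (nths zs {i. odd i})}"

end

theory Submission
  imports Defs "HOL-Library.Poly_Mapping" "HOL-Library.Multiset"
begin

text \<open>Modulo \<open>I\<close> the even variables commute, an odd variable anticommutes with every even one,
  and \<open>z\<^sub>a z\<^sub>b z\<^sub>c \<equiv> z\<^sub>c z\<^sub>b z\<^sub>a\<close> permits sorting the odd variables in odd positions and those in
  even positions independently; so every word is congruent to a scalar multiple of an element
  of \<open>B\<close>.

  For independence, send \<open>y\<^sub>i\<close> to \<open>diag(t\<^sub>i, -t\<^sub>i)\<close> and \<open>z\<^sub>j\<close> to the antidiagonal matrix with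
  entries \<open>b\<^sub>j, c\<^sub>j\<close>, where \<open>t, b, c\<close> are commuting indeterminates. Assignments of traceless
  diagonal matrices to even and antidiagonal matrices to odd variables satisfy the three
  identities, and they are preserved by admissible substitutions (even Lie elements evaluate
  to traceless diagonal matrices), so every element of \<open>I\<close> vanishes under them. Under the
  generic assignment the first row of the image of
  \<open>y\<^sub>a\<^sub>1 \<dots> y\<^sub>a\<^sub>k z\<^sub>c\<^sub>1 z\<^sub>d\<^sub>1 z\<^sub>c\<^sub>2 \<dots>\<close> sums to the single monomial
  \<open>t\<^sub>a\<^sub>1 \<dots> t\<^sub>a\<^sub>k b\<^sub>c\<^sub>1 c\<^sub>d\<^sub>1 b\<^sub>c\<^sub>2 \<dots>\<close>, and the sortedness conditions make these monomials
  pairwise distinct.\<close>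

definition supp :: "(var list \<Rightarrow> 'd::comm_ring_1) \<Rightarrow> var list set" where
  "supp f = {w. f w \<noteq> 0}"

definition fsum :: "'a set \<Rightarrow> ('a \<Rightarrow> var list \<Rightarrow> 'd::comm_ring_1) \<Rightarrow> var list \<Rightarrow> 'd" where
  "fsum A F = (\<lambda>w. \<Sum>a\<in>A. F a w)"

lemma FA_iff_finite_supp: "f \<in> FA \<longleftrightarrow> finite (supp f)"
  by (simp add: FA_def supp_def)

lemma supp_padd: "supp (padd f g) \<subseteq> supp f \<union> supp g"
  by (auto simp: supp_def padd_def)

lemma supp_psub: "supp (psub f g) \<subseteq> supp f \<union> supp g"
  by (auto simp: supp_def psub_def)

lemma supp_psmul: "supp (psmul c f) \<subseteq> supp f"
  by (auto simp: supp_def psmul_def)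

lemma supp_pmono: "supp (pmono u) \<subseteq> {u}"
  by (auto simp: supp_def pmono_def)

lemma fsum_empty [simp]: "fsum {} F = pzero"
  by (simp add: fsum_def pzero_def)

lemma fsum_insert: "finite A \<Longrightarrow> a \<notin> A \<Longrightarrow> fsum (insert a A) F = padd (F a) (fsum A F)"
  by (simp add: fsum_def padd_def)

lemma fsum_swap: "fsum A (\<lambda>a. fsum B (F a)) = fsum B (\<lambda>b. fsum A (\<lambda>a. F a b))"
  unfolding fsum_def by (auto intro: sum.swap)

lemma pzero_FA [simp]: "pzero \<in> FA"
  by (simp add: FA_def pzero_def)

lemma padd_FA [simp]: "f \<in> FA \<Longrightarrow> g \<in> FA \<Longrightarrow> padd f g \<in> FA"
  using supp_padd by (metis FA_iff_finite_supp finite_UnI finite_subset)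

lemma psub_FA [simp]: "f \<in> FA \<Longrightarrow> g \<in> FA \<Longrightarrow> psub f g \<in> FA"
  using supp_psub by (metis FA_iff_finite_supp finite_UnI finite_subset)

lemma psmul_FA [simp]: "f \<in> FA \<Longrightarrow> psmul c f \<in> FA"
  using supp_psmul by (metis FA_iff_finite_supp finite_subset)

lemma pmono_FA [simp]: "pmono u \<in> FA"
  using supp_pmono by (metis FA_iff_finite_supp finite.emptyI finite_insert finite_subset)

lemma fsum_FA [simp]: "finite A \<Longrightarrow> (\<And>a. a \<in> A \<Longrightarrow> F a \<in> FA) \<Longrightarrow> fsum A F \<in> FA"
  by (induction A rule: finite_induct) (auto simp: fsum_insert)

lemma fsum_pmono_expansion: "f \<in> FA \<Longrightarrow> f = fsum (supp f) (\<lambda>u. psmul (f u) (pmono u))"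
proof
  fix w
  assume "f \<in> FA"
  then have "fsum (supp f) (\<lambda>u. psmul (f u) (pmono u)) w = (\<Sum>u\<in>supp f. if u = w then f u else 0)"
    unfolding fsum_def psmul_def pmono_def by (intro sum.cong) auto
  also have "\<dots> = f w"
    using \<open>f \<in> FA\<close> by (auto simp: supp_def FA_iff_finite_supp)
  finally show "f w = fsum (supp f) (\<lambda>u. psmul (f u) (pmono u)) w" by simp
qed

lemma pmul_fsum_left: "pmul (fsum A F) g = fsum A (\<lambda>a. pmul (F a) g)"
  unfolding pmul_def fsum_def by (auto simp: sum_distrib_right intro: sum.swap)

lemma pmul_fsum_right: "pmul g (fsum A F) = fsum A (\<lambda>a. pmul g (F a))"
  unfolding pmul_def fsum_def by (auto simp: sum_distrib_left intro: sum.swap)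

lemma pmul_psmul_left [simp]: "pmul (psmul c f) g = psmul c (pmul f g)"
  unfolding pmul_def psmul_def by (auto simp: sum_distrib_left mult.assoc)

lemma pmul_psmul_right [simp]: "pmul f (psmul c g) = psmul c (pmul f g)"
  unfolding pmul_def psmul_def by (auto simp: sum_distrib_left mult_ac)

lemma psmul_psmul [simp]: "psmul c (psmul d f) = psmul (c * d) f"
  unfolding psmul_def by (auto simp: mult.assoc)

lemma pmul_psub_left: "pmul (psub g h) f = psub (pmul g f) (pmul h f)"
  unfolding pmul_def psub_def by (auto simp: sum_subtractf left_diff_distrib)

lemma pmul_psub_right: "pmul f (psub g h) = psub (pmul f g) (pmul f h)"
  unfolding pmul_def psub_def by (auto simp: sum_subtractf right_diff_distrib)

lemma pmul_pmono_pmono [simp]: "pmul (pmono u) (pmono v) = pmono (u @ v)"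
proof
  fix w :: "var list"
  have "pmul (pmono u) (pmono v) w = (\<Sum>i\<le>length w. if w = u @ v \<and> i = length u then 1 else 0)"
    unfolding pmul_def pmono_def by (intro sum.cong refl) (auto simp: append_eq_conv_conj)
  also have "\<dots> = pmono (u @ v) w"
    by (auto simp: pmono_def)
  finally show "pmul (pmono u) (pmono v) w = pmono (u @ v) w" .
qed

lemma pmul_expansion:
  assumes "f \<in> FA" "g \<in> FA"
  shows "pmul f g = fsum (supp f) (\<lambda>u. fsum (supp g) (\<lambda>v. psmul (f u * g v) (pmono (u @ v))))"
proof -
  have "pmul f g = pmul (fsum (supp f) (\<lambda>u. psmul (f u) (pmono u)))
                        (fsum (supp g) (\<lambda>v. psmul (g v) (pmono v)))"
    using fsum_pmono_expansion assms by metis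
  also have "\<dots> = fsum (supp f) (\<lambda>u. fsum (supp g) (\<lambda>v. psmul (f u * g v) (pmono (u @ v))))"
    unfolding pmul_fsum_left pmul_fsum_right by (simp add: mult.commute, rule fsum_swap)
  finally show ?thesis .
qed

lemma pmul_FA [simp]: "f \<in> FA \<Longrightarrow> g \<in> FA \<Longrightarrow> pmul f g \<in> FA"
  by (subst pmul_expansion) (auto simp: FA_iff_finite_supp[of f] FA_iff_finite_supp[of g] intro!: fsum_FA)

lemma LieX_FA: "f \<in> LieX \<Longrightarrow> f \<in> FA"
  by (induction rule: LieX.induct) (auto simp: lie_def pvar_def)

lemma admissible_FA: "admissible \<sigma> \<Longrightarrow> \<sigma> x \<in> FA"
  by (cases x) (auto simp: admissible_def LieX0_def LieX1_def intro: LieX_FA)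

lemma psubst_eq_fsum:
  "finite A \<Longrightarrow> supp f \<subseteq> A \<Longrightarrow> psubst \<sigma> f = fsum A (\<lambda>w. psmul (f w) (eval_word \<sigma> w))"
  unfolding psubst_def fsum_def psmul_def supp_def by (auto intro!: sum.mono_neutral_left)

lemma eval_word_Nil: "eval_word \<sigma> [] = pone"
  by (simp add: eval_word_def)

lemma eval_word_Cons: "eval_word \<sigma> (x # w) = pmul (\<sigma> x) (eval_word \<sigma> w)"
  by (simp add: eval_word_def)

lemma eval_word_FA: "admissible \<sigma> \<Longrightarrow> eval_word \<sigma> w \<in> FA"
  by (induction w) (simp_all add: eval_word_Nil eval_word_Cons admissible_FA pone_def)

lemma psubst_FA:
  assumes "admissible \<sigma>" "f \<in> FA"
  shows "psubst \<sigma> f \<in> FA"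
proof -
  have "finite (supp f)"
    using assms(2) by (simp add: FA_iff_finite_supp)
  then show ?thesis
    using assms(1) by (simp add: psubst_eq_fsum[of "supp f"] eval_word_FA)
qed

lemma wg_ideal_FA: "wg_ideal FA"
  by (auto simp: wg_ideal_def psubst_FA)

lemma wg_ideal_Inter:
  assumes "Fam \<noteq> {}" and "\<And>J. J \<in> Fam \<Longrightarrow> wg_ideal J"
  shows "wg_ideal (\<Inter>Fam)"
proof -
  obtain J where "J \<in> Fam"
    using assms(1) by blast
  then have "\<Inter>Fam \<subseteq> FA"
    using assms(2)[of J] by (auto simp: wg_ideal_def)
  with assms(2) show ?thesis
    unfolding wg_ideal_def by (intro conjI ballI allI impI) (auto simp: wg_ideal_def)
qed

lemma wg_ideal_wg_generated: "S \<subseteq> FA \<Longrightarrow> wg_ideal (wg_generated S)"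
  unfolding wg_generated_def by (rule wg_ideal_Inter) (use wg_ideal_FA in auto)

lemma wg_generated_superset: "S \<subseteq> wg_generated S"
  by (auto simp: wg_generated_def)

lemma wg_generated_least: "wg_ideal J \<Longrightarrow> S \<subseteq> J \<Longrightarrow> wg_generated S \<subseteq> J"
  by (auto simp: wg_generated_def)

definition rel_YY :: "var list \<Rightarrow> 'd::comm_ring_1" where
  "rel_YY = psub (pmul (pvar (Y 1)) (pvar (Y 2))) (pmul (pvar (Y 2)) (pvar (Y 1)))"

definition rel_ZZZ :: "var list \<Rightarrow> 'd::comm_ring_1" where
  "rel_ZZZ = psub (pmul (pmul (pvar (Z 1)) (pvar (Z 2))) (pvar (Z 3)))
                  (pmul (pmul (pvar (Z 3)) (pvar (Z 2))) (pvar (Z 1)))"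

definition rel_YZ :: "var list \<Rightarrow> 'd::comm_ring_1" where
  "rel_YZ = padd (pmul (pvar (Y 1)) (pvar (Z 1))) (pmul (pvar (Z 1)) (pvar (Y 1)))"

lemma Iid_eq: "Iid = wg_generated {rel_YY, rel_ZZZ, rel_YZ}"
  by (simp add: Iid_def rel_YY_def rel_ZZZ_def rel_YZ_def)

lemma wg_ideal_Iid: "wg_ideal Iid"
  unfolding Iid_eq
  by (rule wg_ideal_wg_generated) (auto simp: rel_YY_def rel_ZZZ_def rel_YZ_def pvar_def)

lemma relations_in_Iid: "rel_YY \<in> Iid" "rel_ZZZ \<in> Iid" "rel_YZ \<in> Iid"
  using wg_generated_superset[of "{rel_YY, rel_ZZZ, rel_YZ}"] unfolding Iid_eq by auto

section \<open>Reduction of words to \<open>B\<close> modulo \<open>I\<close>\<close>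

definition rename_var :: "(nat \<Rightarrow> nat) \<Rightarrow> (nat \<Rightarrow> nat) \<Rightarrow> var \<Rightarrow> var" where
  "rename_var fy fz x = (case x of Y i \<Rightarrow> Y (fy i) | Z i \<Rightarrow> Z (fz i))"

lemma rename_var_simps [simp]: "rename_var fy fz (Y i) = Y (fy i)" "rename_var fy fz (Z i) = Z (fz i)"
  by (simp_all add: rename_var_def)

lemma admissible_renaming: "admissible (\<lambda>x. pvar (rename_var fy fz x) :: var list \<Rightarrow> 'd::comm_ring_1)"
proof -
  have "(pvar (Y j) :: var list \<Rightarrow> 'd) \<in> LieX0" "(pvar (Z j) :: var list \<Rightarrow> 'd) \<in> LieX1" for j
    using LieX.gen unfolding LieX0_def LieX1_def homog_def
    by (auto simp: pvar_def pmono_def zdeg_def isZ_def)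
  then show ?thesis
    unfolding admissible_def by simp
qed

lemma eval_word_renaming: "eval_word (\<lambda>x. pvar (s x)) w = pmono (map s w)"
  by (induction w) (auto simp: eval_word_def pone_def pvar_def)

lemma psubst_binomial:
  assumes "u \<noteq> v"
  shows "psubst \<sigma> (padd (pmono u) (psmul c (pmono v))) =
         padd (eval_word \<sigma> u) (psmul c (eval_word \<sigma> v))"
proof -
  have "supp (padd (pmono u) (psmul c (pmono v))) \<subseteq> {u, v}"
    by (auto simp: supp_def padd_def psmul_def pmono_def)
  then show ?thesis
    using assms
    by (subst psubst_eq_fsum[of "{u, v}"]) (auto simp: fsum_def padd_def psmul_def pmono_def)
qed

function interleave :: "'a list \<Rightarrow> 'a list \<Rightarrow> 'a list" where
  "interleave [] q = q"
| "interleave (x # p) q = x # interleave q p"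
  by pat_completeness auto
termination by (relation "measure (\<lambda>(p, q). length p + length q)") auto

fun evens :: "'a list \<Rightarrow> 'a list" and odds :: "'a list \<Rightarrow> 'a list" where
  "evens [] = []"
| "evens (x # xs) = x # odds xs"
| "odds [] = []"
| "odds (x # xs) = evens xs"

lemma interleave_evens_odds: "interleave (evens xs) (odds xs) = xs"
  by (induction xs) auto

lemma length_evens_odds: "length (evens xs) = (length xs + 1) div 2 \<and> length (odds xs) = length xs div 2"
  by (induction xs) auto

lemma nths_interleave:
  "length q \<le> length p \<Longrightarrow> length p \<le> length q + 1 \<Longrightarrow>
   nths (interleave p q) {i. even i} = p \<and> nths (interleave p q) {i. odd i} = q"
proof (induction p q rule: interleave.induct)
  case (2 x p q)
  have "{j. Suc j \<in> {i::nat. even i}} = {i. odd i}" "{j. Suc j \<in> {i::nat. odd i}} = {i. even i}"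
    by auto
  then show ?case
    using 2 by (simp add: nths_Cons)
qed simp

lemma nths_evens_odds: "nths xs {i. even i} = evens xs \<and> nths xs {i. odd i} = odds xs"
  using nths_interleave[of "odds xs" "evens xs"] length_evens_odds[of xs]
  by (simp add: interleave_evens_odds)

lemma Bmon_iff:
  "b \<in> Bmon \<longleftrightarrow> (\<exists>as zs. b = map Y as @ map Z zs \<and> sorted as \<and> sorted (evens zs) \<and> sorted (odds zs))"
  by (simp add: Bmon_def nths_evens_odds)

locale relations_ideal =
  fixes J :: "(var list \<Rightarrow> 'd::comm_ring_1) set"
  assumes wg_ideal: "wg_ideal J"
    and relations: "rel_YY \<in> J" "rel_ZZZ \<in> J" "rel_YZ \<in> J"
begin

lemma
  shows J_pzero: "pzero \<in> J"
    and J_padd: "f \<in> J \<Longrightarrow> g \<in> J \<Longrightarrow> padd f g \<in> J"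
    and J_psmul: "f \<in> J \<Longrightarrow> psmul c f \<in> J"
    and J_pmul: "f \<in> FA \<Longrightarrow> g \<in> J \<Longrightarrow> h \<in> FA \<Longrightarrow> pmul f (pmul g h) \<in> J"
    and J_psubst: "admissible \<sigma> \<Longrightarrow> f \<in> J \<Longrightarrow> psubst \<sigma> f \<in> J"
  using wg_ideal by (auto simp: wg_ideal_def)

lemma J_fsum: "finite A \<Longrightarrow> (\<And>a. a \<in> A \<Longrightarrow> F a \<in> J) \<Longrightarrow> fsum A F \<in> J"
  by (induction A rule: finite_induct) (auto simp: fsum_insert J_pzero J_padd)

definition mono_cong :: "var list \<Rightarrow> 'd \<Rightarrow> var list \<Rightarrow> bool" where
  "mono_cong u s v \<longleftrightarrow> psub (pmono u) (psmul s (pmono v)) \<in> J"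

lemma mono_cong_refl: "mono_cong u 1 u"
proof -
  have "psub (pmono u) (psmul 1 (pmono u)) = (pzero :: var list \<Rightarrow> 'd)"
    by (auto simp: psub_def psmul_def pzero_def)
  then show ?thesis
    using J_pzero by (simp add: mono_cong_def)
qed

lemma mono_cong_trans: "mono_cong u s v \<Longrightarrow> mono_cong v t w \<Longrightarrow> mono_cong u (s * t) w"
proof -
  assume "mono_cong u s v" "mono_cong v t w"
  moreover have "psub (pmono u) (psmul (s * t) (pmono w)) =
     padd (psub (pmono u) (psmul s (pmono v))) (psmul s (psub (pmono v) (psmul t (pmono w))))"
    by (auto simp: psub_def padd_def psmul_def algebra_simps)
  ultimately show ?thesis
    by (simp add: mono_cong_def J_padd J_psmul)
qed

lemma mono_cong_context: "mono_cong v s v' \<Longrightarrow> mono_cong (u @ v @ w) s (u @ v' @ w)"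
proof -
  assume "mono_cong v s v'"
  moreover have "psub (pmono (u @ v @ w)) (psmul s (pmono (u @ v' @ w))) =
      pmul (pmono u) (pmul (psub (pmono v) (psmul s (pmono v'))) (pmono w))"
    by (simp add: pmul_psub_left pmul_psub_right)
  ultimately show ?thesis
    by (simp add: mono_cong_def J_pmul)
qed

lemma mono_cong_renaming:
  assumes "padd (pmono u) (psmul c (pmono v)) \<in> J" and "u \<noteq> v"
  shows "mono_cong (map (rename_var fy fz) u) (- c) (map (rename_var fy fz) v)"
proof -
  let ?\<sigma> = "\<lambda>x. pvar (rename_var fy fz x)"
  have "psubst ?\<sigma> (padd (pmono u) (psmul c (pmono v))) \<in> J"
    using assms(1) admissible_renaming by (rule J_psubst[rotated])
  moreover have "psubst ?\<sigma> (padd (pmono u) (psmul c (pmono v))) =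
      psub (pmono (map (rename_var fy fz) u)) (psmul (- c) (pmono (map (rename_var fy fz) v)))"
    using assms(2) by (simp add: psubst_binomial eval_word_renaming)
      (auto simp: padd_def psub_def psmul_def)
  ultimately show ?thesis
    by (simp add: mono_cong_def)
qed

lemma mono_cong_YY: "mono_cong [Y i, Y j] 1 [Y j, Y i]"
proof -
  have "(rel_YY :: var list \<Rightarrow> 'd) = padd (pmono [Y 1, Y 2]) (psmul (- 1) (pmono [Y 2, Y 1]))"
    by (auto simp: rel_YY_def pvar_def padd_def psub_def psmul_def)
  then have "mono_cong (map (rename_var (\<lambda>k. if k = 1 then i else j) id) [Y 1, Y 2]) (- (- 1 :: 'd))
                       (map (rename_var (\<lambda>k. if k = 1 then i else j) id) [Y 2, Y 1])"
    using relations(1) by (intro mono_cong_renaming) auto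
  then show ?thesis
    by simp
qed

lemma mono_cong_ZZZ: "mono_cong [Z a, Z b, Z c] 1 [Z c, Z b, Z a]"
proof -
  have "(rel_ZZZ :: var list \<Rightarrow> 'd) = padd (pmono [Z 1, Z 2, Z 3]) (psmul (- 1) (pmono [Z 3, Z 2, Z 1]))"
    by (auto simp: rel_ZZZ_def pvar_def padd_def psub_def psmul_def)
  then have "mono_cong (map (rename_var id (\<lambda>k. if k = 1 then a else if k = 2 then b else c)) [Z 1, Z 2, Z 3])
                       (- (- 1 :: 'd))
                       (map (rename_var id (\<lambda>k. if k = 1 then a else if k = 2 then b else c)) [Z 3, Z 2, Z 1])"
    using relations(2) by (intro mono_cong_renaming) auto
  then show ?thesis
    by simp
qed

lemma mono_cong_ZY: "mono_cong [Z a, Y i] (- 1) [Y i, Z a]"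
proof -
  have "(rel_YZ :: var list \<Rightarrow> 'd) = padd (pmono [Z 1, Y 1]) (psmul 1 (pmono [Y 1, Z 1]))"
    by (auto simp: rel_YZ_def pvar_def padd_def psmul_def)
  then have "mono_cong (map (rename_var (\<lambda>_. i) (\<lambda>_. a)) [Z 1, Y 1]) (- 1 :: 'd)
                       (map (rename_var (\<lambda>_. i) (\<lambda>_. a)) [Y 1, Z 1])"
    using relations(3) by (intro mono_cong_renaming) auto
  then show ?thesis
    by simp
qed

lemma mono_cong_Z_map_Y: "\<exists>t. mono_cong (Z a # map Y as) t (map Y as @ [Z a])"
proof (induction as)
  case Nil
  then show ?case
    using mono_cong_refl by auto
next
  case (Cons i as)
  then obtain t where t: "mono_cong (Z a # map Y as) t (map Y as @ [Z a])"
    by blast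
  have "mono_cong (Z a # Y i # map Y as) (-1) (Y i # Z a # map Y as)"
    using mono_cong_context[OF mono_cong_ZY, where u = "[]" and w = "map Y as"] by simp
  moreover have "mono_cong (Y i # Z a # map Y as) t (Y i # map Y as @ [Z a])"
    using mono_cong_context[OF t, where u = "[Y i]" and w = "[]"] by simp
  ultimately show ?case
    using mono_cong_trans by fastforce
qed

lemma mono_cong_Y_before_Z: "\<exists>t as zs. mono_cong w t (map Y as @ map Z zs)"
proof (induction w)
  case Nil
  then show ?case
    using mono_cong_refl by (metis append_Nil list.map(1))
next
  case (Cons x w)
  then obtain t as zs where "mono_cong w t (map Y as @ map Z zs)"
    by blast
  then have xw: "mono_cong (x # w) t (x # map Y as @ map Z zs)"
    using mono_cong_context[where u = "[x]" and w = "[]"] by fastforce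
  show ?case
  proof (cases x)
    case (Y i)
    then show ?thesis
      using xw by (metis append_Cons list.map(2))
  next
    case (Z a)
    obtain t' where "mono_cong (Z a # map Y as) t' (map Y as @ [Z a])"
      using mono_cong_Z_map_Y by blast
    then have "mono_cong (Z a # map Y as @ map Z zs) t' (map Y as @ map Z (a # zs))"
      using mono_cong_context[where u = "[]" and w = "map Z zs"] by fastforce
    then show ?thesis
      using mono_cong_trans[OF xw] Z by blast
  qed
qed

lemma mono_cong_insort_Y: "mono_cong (map Y (a # l)) 1 (map Y (insort a l))"
proof (induction l)
  case Nil
  then show ?case
    using mono_cong_refl by simp
next
  case (Cons b l)
  show ?case
  proof (cases "a \<le> b")
    case True
    then show ?thesis
      using mono_cong_refl by simp
  next
    case False
    have "mono_cong (Y a # Y b # map Y l) 1 (Y b # Y a # map Y l)"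
      using mono_cong_context[OF mono_cong_YY, where u = "[]" and w = "map Y l"] by simp
    moreover have "mono_cong (Y b # Y a # map Y l) 1 (Y b # map Y (insort a l))"
      using mono_cong_context[OF Cons, where u = "[Y b]" and w = "[]"] by simp
    ultimately show ?thesis
      using mono_cong_trans False by fastforce
  qed
qed

lemma mono_cong_sort_Y: "mono_cong (map Y l) 1 (map Y (sort l))"
proof (induction l)
  case Nil
  then show ?case
    using mono_cong_refl by simp
next
  case (Cons a l)
  have "mono_cong (Y a # map Y l) 1 (Y a # map Y (sort l))"
    using mono_cong_context[OF Cons, where u = "[Y a]" and w = "[]"] by simp
  with mono_cong_insort_Y[of a "sort l"] show ?case
    using mono_cong_trans by fastforce
qed

text \<open>\<open>z\<^sub>a z\<^sub>e z\<^sub>b \<equiv> z\<^sub>b z\<^sub>e z\<^sub>a\<close> transposes neighbouring entries of the same parity class.\<close>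
lemma mono_cong_insort_Z:
  "length p \<le> length q \<Longrightarrow>
   mono_cong (map Z (interleave (a # p) q)) 1 (map Z (interleave (insort a p) q))"
proof (induction p arbitrary: a q)
  case Nil
  then show ?case
    using mono_cong_refl by simp
next
  case (Cons b p)
  then obtain e q' where q: "q = e # q'"
    by (cases q) auto
  show ?case
  proof (cases "a \<le> b")
    case True
    then show ?thesis
      using mono_cong_refl by simp
  next
    case False
    have "mono_cong (Z a # Z e # Z b # map Z (interleave q' p)) 1 (Z b # Z e # Z a # map Z (interleave q' p))"
      using mono_cong_context[OF mono_cong_ZZZ, where u = "[]" and w = "map Z (interleave q' p)"] by simp
    moreover have "mono_cong (map Z (interleave (a # p) q')) 1 (map Z (interleave (insort a p) q'))"
      using Cons q by (intro Cons.IH) auto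
    then have "mono_cong (Z b # Z e # map Z (interleave (a # p) q')) 1
                         (Z b # Z e # map Z (interleave (insort a p) q'))"
      using mono_cong_context[where u = "[Z b, Z e]" and w = "[]"] by fastforce
    ultimately show ?thesis
      using mono_cong_trans False q by fastforce
  qed
qed

lemma mono_cong_sort_Z:
  "length q \<le> length p \<Longrightarrow> length p \<le> length q + 1 \<Longrightarrow>
   mono_cong (map Z (interleave p q)) 1 (map Z (interleave (sort p) (sort q)))"
proof (induction p q rule: interleave.induct)
  case (2 a p q)
  then have "mono_cong (map Z (interleave q p)) 1 (map Z (interleave (sort q) (sort p)))"
    by simp
  then have "mono_cong (Z a # map Z (interleave q p)) 1 (Z a # map Z (interleave (sort q) (sort p)))"
    using mono_cong_context[where u = "[Z a]" and w = "[]"] by fastforce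
  moreover have "mono_cong (map Z (interleave (a # sort p) (sort q))) 1
                           (map Z (interleave (insort a (sort p)) (sort q)))"
    using 2 by (intro mono_cong_insort_Z) auto
  ultimately show ?case
    using mono_cong_trans by fastforce
qed (use mono_cong_refl in simp)

lemma mono_cong_Bmon: "\<exists>t b. b \<in> Bmon \<and> mono_cong w t b"
proof -
  obtain t as zs where "mono_cong w t (map Y as @ map Z zs)"
    using mono_cong_Y_before_Z by blast
  moreover have "mono_cong (map Y as @ map Z zs) 1 (map Y (sort as) @ map Z zs)"
    using mono_cong_context[OF mono_cong_sort_Y, where u = "[]" and w = "map Z zs"] by simp
  moreover define zs' where "zs' = interleave (sort (evens zs)) (sort (odds zs))"
  have "mono_cong (map Z zs) 1 (map Z zs')"
    using mono_cong_sort_Z[of "odds zs" "evens zs"] length_evens_odds[of zs]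
    unfolding zs'_def interleave_evens_odds by auto
  then have "mono_cong (map Y (sort as) @ map Z zs) 1 (map Y (sort as) @ map Z zs')"
    using mono_cong_context[where u = "map Y (sort as)" and w = "[]"] by fastforce
  moreover have "nths zs' {i. even i} = sort (evens zs) \<and> nths zs' {i. odd i} = sort (odds zs)"
    unfolding zs'_def using length_evens_odds[of zs] by (intro nths_interleave) auto
  then have "map Y (sort as) @ map Z zs' \<in> Bmon"
    unfolding Bmon_def mem_Collect_eq by (intro exI[of _ "sort as"] exI[of _ zs']) auto
  ultimately show ?thesis
    using mono_cong_trans by blast
qed

lemma spanned_by_Bmon:
  assumes "f \<in> FA"
  shows "\<exists>S c. finite S \<and> S \<subseteq> Bmon \<and> psub f (fsum S (\<lambda>b. psmul (c b) (pmono b))) \<in> J"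
proof -
  obtain t nf where nf: "\<And>w. nf w \<in> Bmon \<and> mono_cong w (t w) (nf w)"
    using mono_cong_Bmon by metis
  define A where "A = supp f"
  have "finite A"
    using assms by (simp add: A_def FA_iff_finite_supp)
  define c where "c b = (\<Sum>w\<in>{w \<in> A. nf w = b}. f w * t w)" for b
  have "psub f (fsum (nf ` A) (\<lambda>b. psmul (c b) (pmono b))) =
      fsum A (\<lambda>w. psmul (f w) (psub (pmono w) (psmul (t w) (pmono (nf w)))))"
  proof
    fix u
    have "(\<Sum>w\<in>A. f w * t w * pmono (nf w) u) =
          (\<Sum>b\<in>nf ` A. \<Sum>w\<in>{w \<in> A. nf w = b}. f w * t w * pmono (nf w) u)"
      by (rule sum.image_gen[OF \<open>finite A\<close>])
    then have nf_sum: "(\<Sum>b\<in>nf ` A. c b * pmono b u) = (\<Sum>w\<in>A. f w * t w * pmono (nf w) u)"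
      unfolding c_def sum_distrib_right by (auto intro!: sum.cong)
    have f_sum: "f u = (\<Sum>w\<in>A. f w * pmono w u)"
      using fun_cong[OF fsum_pmono_expansion[OF assms], of u] by (simp add: A_def fsum_def psmul_def)
    show "psub f (fsum (nf ` A) (\<lambda>b. psmul (c b) (pmono b))) u =
        fsum A (\<lambda>w. psmul (f w) (psub (pmono w) (psmul (t w) (pmono (nf w))))) u"
      unfolding psub_def fsum_def psmul_def f_sum nf_sum
      by (simp add: right_diff_distrib sum_subtractf mult.assoc)
  qed
  moreover have "fsum A (\<lambda>w. psmul (f w) (psub (pmono w) (psmul (t w) (pmono (nf w))))) \<in> J"
    using nf \<open>finite A\<close> by (intro J_fsum J_psmul) (auto simp: mono_cong_def)
  ultimately show ?thesis
    using nf \<open>finite A\<close> by (intro exI[of _ "nf ` A"] exI[of _ c]) auto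
qed

end

section \<open>A model by \<open>2 \<times> 2\<close> matrices\<close>

datatype 'r m2 = M (e11: 'r) (e12: 'r) (e21: 'r) (e22: 'r)

lemma m2_eqI: "e11 A = e11 B \<Longrightarrow> e12 A = e12 B \<Longrightarrow> e21 A = e21 B \<Longrightarrow> e22 A = e22 B \<Longrightarrow> A = B"
  by (cases A; cases B) auto

instantiation m2 :: (comm_ring_1) ring_1
begin

definition "0 = M 0 0 0 0"
definition "1 = M 1 0 0 1"
definition "A + B = M (e11 A + e11 B) (e12 A + e12 B) (e21 A + e21 B) (e22 A + e22 B)"
definition "A - B = M (e11 A - e11 B) (e12 A - e12 B) (e21 A - e21 B) (e22 A - e22 B)"
definition "- A = M (- e11 A) (- e12 A) (- e21 A) (- e22 A)"
definition "A * B = M (e11 A * e11 B + e12 A * e21 B) (e11 A * e12 B + e12 A * e22 B)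
                      (e21 A * e11 B + e22 A * e21 B) (e21 A * e12 B + e22 A * e22 B)"

instance
  by intro_classes
    (auto intro!: m2_eqI simp: zero_m2_def one_m2_def plus_m2_def minus_m2_def uminus_m2_def
      times_m2_def algebra_simps)

end

lemma m2_entries [simp]:
  "e11 (0::'r::comm_ring_1 m2) = 0" "e12 (0::'r m2) = 0" "e21 (0::'r m2) = 0" "e22 (0::'r m2) = 0"
  "e11 (1::'r m2) = 1" "e12 (1::'r m2) = 0" "e21 (1::'r m2) = 0" "e22 (1::'r m2) = 1"
  "e11 (A + B) = e11 A + e11 B" "e12 (A + B) = e12 A + e12 B"
  "e21 (A + B) = e21 A + e21 B" "e22 (A + B) = e22 A + e22 B"
  "e11 (A - B) = e11 A - e11 B" "e12 (A - B) = e12 A - e12 B"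
  "e21 (A - B) = e21 A - e21 B" "e22 (A - B) = e22 A - e22 B"
  "e11 (A * B) = e11 A * e11 B + e12 A * e21 B" "e12 (A * B) = e11 A * e12 B + e12 A * e22 B"
  "e21 (A * B) = e21 A * e11 B + e22 A * e21 B" "e22 (A * B) = e21 A * e12 B + e22 A * e22 B"
  by (simp_all add: zero_m2_def one_m2_def plus_m2_def minus_m2_def times_m2_def)

lemma m2_entries_sum:
  fixes F :: "'a \<Rightarrow> 'r::comm_ring_1 m2"
  shows "e11 (sum F S) = (\<Sum>x\<in>S. e11 (F x))" "e12 (sum F S) = (\<Sum>x\<in>S. e12 (F x))"
    "e21 (sum F S) = (\<Sum>x\<in>S. e21 (F x))" "e22 (sum F S) = (\<Sum>x\<in>S. e22 (F x))"
  by (induction S rule: infinite_finite_induct; simp)+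

definition diagonal :: "'r::comm_ring_1 m2 \<Rightarrow> bool" where
  "diagonal A \<longleftrightarrow> e12 A = 0 \<and> e21 A = 0"

definition antidiagonal :: "'r::comm_ring_1 m2 \<Rightarrow> bool" where
  "antidiagonal A \<longleftrightarrow> e11 A = 0 \<and> e22 A = 0"

definition trace :: "'r::comm_ring_1 m2 \<Rightarrow> 'r" where
  "trace A = e11 A + e22 A"

lemma diagonal_commute: "diagonal A \<Longrightarrow> diagonal B \<Longrightarrow> A * B = B * A"
  by (rule m2_eqI) (auto simp: diagonal_def mult.commute)

lemma antidiagonal_triple_reverse:
  "antidiagonal A \<Longrightarrow> antidiagonal B \<Longrightarrow> antidiagonal C \<Longrightarrow> A * (B * C) = C * (B * A)"
  by (rule m2_eqI) (auto simp: antidiagonal_def mult_ac)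

lemma traceless_diagonal_anticommute:
  assumes "diagonal A" "trace A = 0" "antidiagonal B"
  shows "A * B + B * A = 0"
proof -
  have "e22 A = - e11 A"
    using assms(2) by (simp add: trace_def eq_neg_iff_add_eq_0 add.commute)
  then show ?thesis
    using assms by (intro m2_eqI) (auto simp: diagonal_def antidiagonal_def algebra_simps)
qed

lemma trace_add: "trace (A + B) = trace A + trace B"
  by (simp add: trace_def algebra_simps)

lemma trace_commutator: "trace (A * B - B * A) = 0"
  by (simp add: trace_def algebra_simps)

text \<open>Polynomials over \<open>'d\<close> in commuting indeterminates indexed by \<open>nat \<times> nat\<close>; a monomial
  is the multiset of its indeterminates.\<close>
type_synonym 'd cpoly = "(nat \<times> nat) multiset \<Rightarrow>\<^sub>0 'd"

definition scalar :: "'d::comm_ring_1 \<Rightarrow> 'd cpoly m2" where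
  "scalar c = M (Poly_Mapping.single {#} c) 0 0 (Poly_Mapping.single {#} c)"

lemma scalar_entries [simp]:
  "e11 (scalar c) = Poly_Mapping.single {#} c" "e12 (scalar c) = 0"
  "e21 (scalar c) = 0" "e22 (scalar c) = Poly_Mapping.single {#} c"
  by (simp_all add: scalar_def)

lemma scalar_0 [simp]: "scalar 0 = 0"
  by (rule m2_eqI) simp_all

lemma scalar_1 [simp]: "scalar 1 = 1"
  by (rule m2_eqI) (simp_all add: one_poly_mapping.abs_eq)

lemma scalar_add: "scalar (a + b) = scalar a + scalar b"
  by (rule m2_eqI) (simp_all add: single_add)

lemma scalar_diff: "scalar (a - b) = scalar a - scalar b"
  by (rule m2_eqI) (simp_all add: single_diff)

lemma scalar_mult: "scalar (a * b) = scalar a * scalar b"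
  by (rule m2_eqI) (simp_all add: mult_single)

lemma scalar_commute: "scalar c * A = A * scalar c"
  by (rule m2_eqI) (simp_all add: mult.commute)

lemma trace_scalar_mult: "trace (scalar c * A) = Poly_Mapping.single {#} c * trace A"
  by (simp add: trace_def algebra_simps)

definition eval_m2 :: "(var \<Rightarrow> 'd::comm_ring_1 cpoly m2) \<Rightarrow> (var list \<Rightarrow> 'd) \<Rightarrow> 'd cpoly m2" where
  "eval_m2 \<phi> f = (\<Sum>w\<in>supp f. scalar (f w) * prod_list (map \<phi> w))"

lemma eval_m2_eq_sum:
  "finite A \<Longrightarrow> supp f \<subseteq> A \<Longrightarrow> eval_m2 \<phi> f = (\<Sum>w\<in>A. scalar (f w) * prod_list (map \<phi> w))"
  unfolding eval_m2_def by (rule sum.mono_neutral_left) (auto simp: supp_def)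

lemma eval_m2_padd: "f \<in> FA \<Longrightarrow> g \<in> FA \<Longrightarrow> eval_m2 \<phi> (padd f g) = eval_m2 \<phi> f + eval_m2 \<phi> g"
  using supp_padd[of f g]
  by (simp add: eval_m2_eq_sum[of "supp f \<union> supp g"] FA_iff_finite_supp padd_def scalar_add
      distrib_right sum.distrib)

lemma eval_m2_psub: "f \<in> FA \<Longrightarrow> g \<in> FA \<Longrightarrow> eval_m2 \<phi> (psub f g) = eval_m2 \<phi> f - eval_m2 \<phi> g"
  using supp_psub[of f g]
  by (simp add: eval_m2_eq_sum[of "supp f \<union> supp g"] FA_iff_finite_supp psub_def scalar_diff
      left_diff_distrib sum_subtractf)

lemma eval_m2_psmul: "f \<in> FA \<Longrightarrow> eval_m2 \<phi> (psmul c f) = scalar c * eval_m2 \<phi> f"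
  using supp_psmul[of c f]
  by (simp add: eval_m2_eq_sum[of "supp f"] FA_iff_finite_supp psmul_def scalar_mult
      sum_distrib_left mult.assoc)

lemma eval_m2_pzero [simp]: "eval_m2 \<phi> pzero = 0"
  by (simp add: eval_m2_def supp_def pzero_def)

lemma eval_m2_pmono [simp]: "eval_m2 \<phi> (pmono u) = prod_list (map \<phi> u)"
  using supp_pmono[of u]
  by (subst eval_m2_eq_sum[of "{u}"]) (auto simp: pmono_def)

lemma eval_m2_fsum:
  "finite A \<Longrightarrow> (\<And>a. a \<in> A \<Longrightarrow> F a \<in> FA) \<Longrightarrow> eval_m2 \<phi> (fsum A F) = (\<Sum>a\<in>A. eval_m2 \<phi> (F a))"
  by (induction A rule: finite_induct) (simp_all add: fsum_insert eval_m2_padd)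

lemma eval_m2_pmul:
  assumes "f \<in> FA" "g \<in> FA"
  shows "eval_m2 \<phi> (pmul f g) = eval_m2 \<phi> f * eval_m2 \<phi> g"
proof -
  have fin: "finite (supp f)" "finite (supp g)"
    using assms by (simp_all add: FA_iff_finite_supp)
  have "eval_m2 \<phi> (pmul f g) =
      (\<Sum>u\<in>supp f. \<Sum>v\<in>supp g. scalar (f u * g v) * prod_list (map \<phi> (u @ v)))"
    by (subst pmul_expansion[OF assms]) (simp add: eval_m2_fsum fin eval_m2_psmul)
  also have "\<dots> = (\<Sum>u\<in>supp f. \<Sum>v\<in>supp g.
      (scalar (f u) * prod_list (map \<phi> u)) * (scalar (g v) * prod_list (map \<phi> v)))"
    by (intro sum.cong refl) (simp add: scalar_mult mult.assoc scalar_commute[of "g _"])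
  also have "\<dots> = eval_m2 \<phi> f * eval_m2 \<phi> g"
    by (simp add: eval_m2_def sum_product)
  finally show ?thesis .
qed

lemma eval_m2_pvar [simp]: "eval_m2 \<phi> (pvar x) = \<phi> x"
  by (simp add: pvar_def)

lemma eval_m2_eval_word:
  "admissible \<sigma> \<Longrightarrow> eval_m2 \<phi> (eval_word \<sigma> w) = prod_list (map (\<lambda>x. eval_m2 \<phi> (\<sigma> x)) w)"
proof (induction w)
  case Nil
  then show ?case
    by (simp add: eval_word_Nil pone_def)
next
  case (Cons x w)
  then show ?case
    by (simp add: eval_word_Cons eval_m2_pmul admissible_FA eval_word_FA)
qed

lemma eval_m2_psubst:
  assumes "admissible \<sigma>" "f \<in> FA"
  shows "eval_m2 \<phi> (psubst \<sigma> f) = eval_m2 (\<lambda>x. eval_m2 \<phi> (\<sigma> x)) f"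
proof -
  have "finite (supp f)"
    using assms(2) by (simp add: FA_iff_finite_supp)
  then have "eval_m2 \<phi> (psubst \<sigma> f) = (\<Sum>w\<in>supp f. scalar (f w) * eval_m2 \<phi> (eval_word \<sigma> w))"
    using assms(1) by (simp add: psubst_eq_fsum[of "supp f"] eval_m2_fsum eval_m2_psmul eval_word_FA)
  also have "\<dots> = eval_m2 (\<lambda>x. eval_m2 \<phi> (\<sigma> x)) f"
    using assms(1) by (simp add: eval_m2_eval_word eval_m2_def[of "\<lambda>x. eval_m2 \<phi> (\<sigma> x)" f])
  finally show ?thesis .
qed

definition graded_traceless :: "(var \<Rightarrow> 'd::comm_ring_1 cpoly m2) \<Rightarrow> bool" where
  "graded_traceless \<phi> \<longleftrightarrow> (\<forall>i. diagonal (\<phi> (Y i)) \<and> trace (\<phi> (Y i)) = 0 \<and> antidiagonal (\<phi> (Z i)))"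

lemma graded_traceless_prod_list:
  assumes "graded_traceless \<phi>"
  shows "(even (length (filter isZ w)) \<longrightarrow> diagonal (prod_list (map \<phi> w))) \<and>
         (odd (length (filter isZ w)) \<longrightarrow> antidiagonal (prod_list (map \<phi> w)))"
  using assms
  by (induction w) (auto simp: graded_traceless_def diagonal_def antidiagonal_def isZ_def split: var.split)

lemma graded_traceless_eval_m2_homog:
  assumes "graded_traceless \<phi>"
  shows "homog 0 f \<Longrightarrow> diagonal (eval_m2 \<phi> f)" and "homog 1 f \<Longrightarrow> antidiagonal (eval_m2 \<phi> f)"
proof -
  have parity: "homog p f \<Longrightarrow> w \<in> supp f \<Longrightarrow> length (filter isZ w) mod 2 = p" for p w
    by (auto simp: homog_def supp_def zdeg_def)
  show "homog 0 f \<Longrightarrow> diagonal (eval_m2 \<phi> f)"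
  proof -
    assume "homog 0 f"
    then have "diagonal (prod_list (map \<phi> w))" if "w \<in> supp f" for w
      using graded_traceless_prod_list[OF assms] parity[OF \<open>homog 0 f\<close> that] by presburger
    then show ?thesis
      by (simp add: eval_m2_def diagonal_def m2_entries_sum)
  qed
  show "homog 1 f \<Longrightarrow> antidiagonal (eval_m2 \<phi> f)"
  proof -
    assume "homog 1 f"
    then have "antidiagonal (prod_list (map \<phi> w))" if "w \<in> supp f" for w
      using graded_traceless_prod_list[OF assms] parity[OF \<open>homog 1 f\<close> that] by presburger
    then show ?thesis
      by (simp add: eval_m2_def antidiagonal_def m2_entries_sum)
  qed
qed

lemma LieX_trace_eval_m2: "f \<in> LieX \<Longrightarrow> graded_traceless \<phi> \<Longrightarrow> trace (eval_m2 \<phi> f) = 0"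
proof (induction rule: LieX.induct)
  case (gen x)
  then show ?case
    by (cases x) (auto simp: graded_traceless_def antidiagonal_def trace_def)
qed (simp_all add: lie_def eval_m2_padd eval_m2_psub eval_m2_psmul eval_m2_pmul LieX_FA
       trace_add trace_scalar_mult trace_commutator)

lemma graded_traceless_substitution:
  assumes "admissible \<sigma>" "graded_traceless \<phi>"
  shows "graded_traceless (\<lambda>x. eval_m2 \<phi> (\<sigma> x))"
  unfolding graded_traceless_def
proof (intro allI conjI)
  fix i
  have "\<sigma> (Y i) \<in> LieX0" "\<sigma> (Z i) \<in> LieX1"
    using assms(1) by (auto simp: admissible_def)
  then show "diagonal (eval_m2 \<phi> (\<sigma> (Y i)))" "trace (eval_m2 \<phi> (\<sigma> (Y i))) = 0"
    "antidiagonal (eval_m2 \<phi> (\<sigma> (Z i)))"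
    using assms(2) graded_traceless_eval_m2_homog LieX_trace_eval_m2
    by (auto simp: LieX0_def LieX1_def)
qed

definition m2_identities :: "(var list \<Rightarrow> 'd::comm_ring_1) set" where
  "m2_identities = {f \<in> FA. \<forall>\<phi>. graded_traceless \<phi> \<longrightarrow> eval_m2 \<phi> f = 0}"

lemma wg_ideal_m2_identities: "wg_ideal m2_identities"
  unfolding wg_ideal_def m2_identities_def
  by (auto simp: eval_m2_padd eval_m2_psmul eval_m2_pmul psubst_FA eval_m2_psubst
      graded_traceless_substitution)

lemma relations_in_m2_identities:
  "rel_YY \<in> m2_identities" "rel_ZZZ \<in> m2_identities" "rel_YZ \<in> m2_identities"
  unfolding m2_identities_def rel_YY_def rel_ZZZ_def rel_YZ_def
  by (auto simp: eval_m2_psub eval_m2_padd eval_m2_pmul pvar_def graded_traceless_def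
      intro!: diagonal_commute antidiagonal_triple_reverse traceless_diagonal_anticommute)

lemma Iid_subset_m2_identities: "Iid \<subseteq> m2_identities"
  unfolding Iid_eq
  by (intro wg_generated_least wg_ideal_m2_identities) (simp add: relations_in_m2_identities)

section \<open>Linear independence of \<open>B\<close>\<close>

definition indet :: "nat \<times> nat \<Rightarrow> 'd::comm_ring_1 cpoly" where
  "indet k = Poly_Mapping.single {#k#} 1"

text \<open>Indeterminates \<open>(0, i)\<close>, \<open>(1, j)\<close>, \<open>(2, j)\<close> play the roles of \<open>t\<^sub>i\<close>, \<open>b\<^sub>j\<close>, \<open>c\<^sub>j\<close>.\<close>
definition generic :: "var \<Rightarrow> 'd::comm_ring_1 cpoly m2" where
  "generic x = (case x of Y i \<Rightarrow> M (indet (0, i)) 0 0 (- indet (0, i))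
                       | Z j \<Rightarrow> M 0 (indet (1, j)) (indet (2, j)) 0)"

lemma graded_traceless_generic: "graded_traceless generic"
  by (simp add: graded_traceless_def generic_def diagonal_def antidiagonal_def trace_def)

definition t_monomial :: "nat list \<Rightarrow> (nat \<times> nat) multiset" where
  "t_monomial as = mset (map (Pair 0) as)"

definition bc_monomial :: "nat list \<Rightarrow> (nat \<times> nat) multiset" where
  "bc_monomial zs = mset (map (Pair 1) (evens zs)) + mset (map (Pair 2) (odds zs))"

definition cb_monomial :: "nat list \<Rightarrow> (nat \<times> nat) multiset" where
  "cb_monomial zs = mset (map (Pair 2) (evens zs)) + mset (map (Pair 1) (odds zs))"

abbreviation monomial :: "(nat \<times> nat) multiset \<Rightarrow> 'd::comm_ring_1 cpoly" where
  "monomial k \<equiv> Poly_Mapping.single k 1"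

lemma generic_prod_Y:
  "e11 (prod_list (map (generic \<circ> Y) as)) = monomial (t_monomial as) \<and>
   e12 (prod_list (map (generic \<circ> Y) as)) = 0"
proof (induction as)
  case (Cons a as)
  have "t_monomial (a # as) = {#(0, a)#} + t_monomial as"
    by (simp add: t_monomial_def)
  with Cons show ?case
    by (simp add: generic_def indet_def mult_single)
qed (simp add: t_monomial_def)

lemma generic_prod_Z:
  "prod_list (map (generic \<circ> Z) zs) =
     (if even (length zs) then M (monomial (bc_monomial zs)) 0 0 (monomial (cb_monomial zs))
      else M 0 (monomial (bc_monomial zs)) (monomial (cb_monomial zs)) 0)"
proof (induction zs)
  case (Cons x zs)
  have "bc_monomial (x # zs) = add_mset (1, x) (cb_monomial zs)"
       "cb_monomial (x # zs) = add_mset (2, x) (bc_monomial zs)"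
    by (simp_all add: bc_monomial_def cb_monomial_def)
  with Cons show ?case
    by (auto intro!: m2_eqI simp: generic_def indet_def mult_single)
qed (simp add: bc_monomial_def cb_monomial_def one_m2_def)

definition row1_sum :: "'r::comm_ring_1 m2 \<Rightarrow> 'r" where
  "row1_sum A = e11 A + e12 A"

lemma row1_sum_sum: "row1_sum (sum F S) = (\<Sum>x\<in>S. row1_sum (F x))"
  by (simp add: row1_sum_def m2_entries_sum sum.distrib)

lemma row1_sum_scalar_mult: "row1_sum (scalar c * A) = Poly_Mapping.single {#} c * row1_sum A"
  by (simp add: row1_sum_def algebra_simps)

definition generic_exponent :: "var list \<Rightarrow> (nat \<times> nat) multiset" where
  "generic_exponent w = t_monomial [i. Y i \<leftarrow> w] + bc_monomial [j. Z j \<leftarrow> w]"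

lemma generic_exponent_Y_Z: "generic_exponent (map Y as @ map Z zs) = t_monomial as + bc_monomial zs"
proof -
  have "[i. Y i \<leftarrow> map Y as @ map Z zs] = as" "[j. Z j \<leftarrow> map Y as @ map Z zs] = zs"
    by (induction as; induction zs; simp)+
  then show ?thesis
    by (simp add: generic_exponent_def)
qed

lemma row1_sum_generic:
  assumes "b \<in> Bmon"
  shows "row1_sum (prod_list (map generic b)) = (monomial (generic_exponent b) :: 'd::comm_ring_1 cpoly)"
proof -
  obtain as zs where b: "b = map Y as @ map Z zs"
    using assms by (auto simp: Bmon_iff)
  have "e11 (prod_list (map (generic \<circ> Y) as)) = (monomial (t_monomial as) :: 'd cpoly)"
       "e12 (prod_list (map (generic \<circ> Y) as)) = (0 :: 'd cpoly)"
    using generic_prod_Y by blast+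
  then have "row1_sum (prod_list (map generic b)) =
      (monomial (t_monomial as) :: 'd cpoly) * row1_sum (prod_list (map (generic \<circ> Z) zs))"
    by (simp add: b row1_sum_def distrib_left)
  also have "row1_sum (prod_list (map (generic \<circ> Z) zs)) = (monomial (bc_monomial zs) :: 'd cpoly)"
    by (simp add: generic_prod_Z row1_sum_def)
  finally show ?thesis
    by (simp add: b generic_exponent_Y_Z mult_single)
qed

definition tag_part :: "nat \<Rightarrow> (nat \<times> nat) multiset \<Rightarrow> nat multiset" where
  "tag_part k m = image_mset snd (filter_mset (\<lambda>p. fst p = k) m)"

lemma tag_part_add: "tag_part k (A + B) = tag_part k A + tag_part k B"
  by (simp add: tag_part_def)

lemma tag_part_image_Pair: "tag_part k (image_mset (Pair j) A) = (if j = k then A else {#})"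
  by (induction A) (auto simp: tag_part_def)

lemma generic_exponent_inj_on: "inj_on generic_exponent Bmon"
proof (rule inj_onI)
  fix b b'
  assume "b \<in> Bmon" "b' \<in> Bmon" and eq: "generic_exponent b = generic_exponent b'"
  then obtain as zs as' zs' where b: "b = map Y as @ map Z zs" "b' = map Y as' @ map Z zs'"
    and sorted: "sorted as" "sorted (evens zs)" "sorted (odds zs)"
                "sorted as'" "sorted (evens zs')" "sorted (odds zs')"
    by (auto simp: Bmon_iff)
  have "tag_part k (t_monomial as + bc_monomial zs) = tag_part k (t_monomial as' + bc_monomial zs')" for k
    using eq by (simp add: b generic_exponent_Y_Z)
  from this[of 0] this[of 1] this[of 2]
  have "mset as = mset as'" "mset (evens zs) = mset (evens zs')" "mset (odds zs) = mset (odds zs')"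
    by (simp_all add: t_monomial_def bc_monomial_def tag_part_add tag_part_image_Pair)
  then have "as = as'" "evens zs = evens zs'" "odds zs = odds zs'"
    using sorted by (metis properties_for_sort)+
  then show "b = b'"
    using b by (metis interleave_evens_odds)
qed

lemma Bmon_independent_modulo_m2_identities:
  assumes "finite S" "S \<subseteq> Bmon" "fsum S (\<lambda>b. psmul (c b) (pmono b)) \<in> m2_identities"
    and "b\<^sub>0 \<in> S"
  shows "c b\<^sub>0 = 0"
proof -
  have "eval_m2 generic (fsum S (\<lambda>b. psmul (c b) (pmono b))) = 0"
    using assms(3) graded_traceless_generic unfolding m2_identities_def by blast
  then have "(\<Sum>b\<in>S. scalar (c b) * prod_list (map generic b)) = 0"
    using assms(1) by (simp add: eval_m2_fsum eval_m2_psmul)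
  then have "row1_sum (\<Sum>b\<in>S. scalar (c b) * prod_list (map generic b)) = 0"
    by (simp add: row1_sum_def)
  moreover have "row1_sum (\<Sum>b\<in>S. scalar (c b) * prod_list (map generic b)) =
      (\<Sum>b\<in>S. Poly_Mapping.single (generic_exponent b) (c b))"
    unfolding row1_sum_sum row1_sum_scalar_mult
    using assms(2) by (intro sum.cong refl) (auto simp: row1_sum_generic mult_single)
  ultimately have "(\<Sum>b\<in>S. Poly_Mapping.single (generic_exponent b) (c b)) = 0"
    by simp
  then have "0 = (\<Sum>b\<in>S. Poly_Mapping.lookup (Poly_Mapping.single (generic_exponent b) (c b))
                                           (generic_exponent b\<^sub>0))"
    by (metis lookup_sum lookup_zero)
  also have "\<dots> = (\<Sum>b\<in>S. if b = b\<^sub>0 then c b else 0)"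
    using generic_exponent_inj_on assms(2,4)
    by (intro sum.cong refl) (auto simp: lookup_single when_def inj_on_def subset_iff)
  also have "\<dots> = c b\<^sub>0"
    using assms(1,4) by simp
  finally show ?thesis
    by simp
qed

theorem mainTheorem4:
  assumes "infinite (UNIV :: 'd::idom set)"
  shows "(\<forall>f \<in> (FA :: (var list \<Rightarrow> 'd) set). \<exists>S c. finite S \<and> S \<subseteq> Bmon \<and>
            psub f (\<lambda>w. \<Sum>b\<in>S. c b * pmono b w) \<in> Iid)
       \<and> (\<forall>S (c :: var list \<Rightarrow> 'd). finite S \<and> S \<subseteq> Bmon \<and>
            (\<lambda>w. \<Sum>b\<in>S. c b * pmono b w) \<in> Iid \<longrightarrow> (\<forall>b\<in>S. c b = 0))"
proof -
  interpret relations_ideal "Iid :: (var list \<Rightarrow> 'd) set"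
    using wg_ideal_Iid relations_in_Iid by unfold_locales
  have combination: "(\<lambda>w. \<Sum>b\<in>S. c b * pmono b w) = fsum S (\<lambda>b. psmul (c b) (pmono b))"
    for S and c :: "var list \<Rightarrow> 'd"
    by (simp add: fsum_def psmul_def)
  show ?thesis
    unfolding combination
    using spanned_by_Bmon Bmon_independent_modulo_m2_identities Iid_subset_m2_identities by blast
qed

end
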